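(* Every poset $P$ embeds (as an ordered set) into the poset $AM_2(P(2))$.
   Context: For a poset $P$, $P(2)$ is the set $P\times\{0,1\}$ with the order: $(x,i)\leq(y,j)$ iff either ($i=j$ and $x\leq y$), or ($i=0$, $j=1$, and there exist incomparable elements $x',y'\in P$ with $x\leq x'$ and $y'\leq y$); this is a partial order. For a poset $Q$, $AM_2(Q)$ is the set of two-element maximal antichains of $Q$, ordered by domination: $X\leq Y$ iff for every $x\in X$ there is $y\in Y$ with $x\leq y$. An embedding is a map $e$ with $x\leq y\iff e(x)\leq e(y)$. *)

theory Defs
  imports Main
begin

definition incomp :: "'a set \<Rightarrow> 'a rel \<Rightarrow> 'a \<Rightarrow> 'a \<Rightarrow> bool" where
  "incomp A r x y \<longleftrightarrow> x \<in> A \<and> y \<in> A \<and> (x, y) \<notin> r \<and> (y, x) \<notin> r"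

definition P2_carrier :: "'a set \<Rightarrow> ('a \<times> nat) set" where
  "P2_carrier A = A \<times> {0, 1}"

definition P2_rel :: "'a set \<Rightarrow> 'a rel \<Rightarrow> ('a \<times> nat) rel" where
  "P2_rel A r = {((x, i), (y, j)). (x, i) \<in> P2_carrier A \<and> (y, j) \<in> P2_carrier A \<and>
      ((i = j \<and> (x, y) \<in> r) \<or>
       (i = 0 \<and> j = 1 \<and> (\<exists>x' y'. incomp A r x' y' \<and> (x, x') \<in> r \<and> (y', y) \<in> r)))}"

definition AM2 :: "'b set \<Rightarrow> 'b rel \<Rightarrow> 'b set set" where
  "AM2 B s = {X. X \<subseteq> B \<and> card X = 2 \<and>
      (\<forall>x\<in>X. \<forall>y\<in>X. x \<noteq> y \<longrightarrow> incomp B s x y) \<and>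
      (\<forall>z\<in>B - X. \<exists>x\<in>X. (z, x) \<in> s \<or> (x, z) \<in> s)}"

definition dominated :: "'b rel \<Rightarrow> 'b set \<Rightarrow> 'b set \<Rightarrow> bool" where
  "dominated s X Y \<longleftrightarrow> (\<forall>x\<in>X. \<exists>y\<in>Y. (x, y) \<in> s)"

end

theory Submission
  imports Defs
begin

text \<open>Each x is sent to its two copies {(x,0), (x,1)} in P(2). They are incomparable,
  since (x,0) \<le> (x,1) would need x \<le> x' and y' \<le> x for an incomparable pair x', y'.
  The antichain is maximal: a z comparable with x is comparable with x on both levels,
  and a z incomparable with x satisfies (z,0) \<le> (x,1) and (x,0) \<le> (z,1), witnessed
  by the incomparable pair z, x itself. Finally nothing on level 1 lies below level 0,
  so {(x,0),(x,1)} is dominated by {(y,0),(y,1)} exactly when (x,1) \<le> (y,1),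
  i.e. when x \<le> y.\<close>

definition P2_fibre :: "'a \<Rightarrow> ('a \<times> nat) set" where
  "P2_fibre x = {(x, 0), (x, 1)}"

lemma P2_rel_same_level_iff:
  "((x, i), (y, i)) \<in> P2_rel A r \<longleftrightarrow> x \<in> A \<and> y \<in> A \<and> i \<in> {0, 1} \<and> (x, y) \<in> r"
  unfolding P2_rel_def P2_carrier_def by auto

lemma P2_rel_not_1_0: "((x, 1), (y, 0)) \<notin> P2_rel A r"
  unfolding P2_rel_def P2_carrier_def by auto

lemma P2_rel_0_1_iff:
  "((x, 0), (y, 1)) \<in> P2_rel A r \<longleftrightarrow> x \<in> A \<and> y \<in> A \<and>
     (\<exists>x' y'. incomp A r x' y' \<and> (x, x') \<in> r \<and> (y', y) \<in> r)"
  unfolding P2_rel_def P2_carrier_def by auto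

lemma P2_rel_not_0_1_same:
  assumes "trans r"
  shows "((x, 0), (x, 1)) \<notin> P2_rel A r"
proof
  assume "((x, 0), (x, 1)) \<in> P2_rel A r"
  then obtain x' y' where "incomp A r x' y'" "(x, x') \<in> r" "(y', x) \<in> r"
    unfolding P2_rel_0_1_iff by blast
  with assms show False
    unfolding incomp_def by (meson transD)
qed

lemma P2_fibre_antichain:
  assumes "trans r" and "x \<in> A"
  shows "\<forall>u\<in>P2_fibre x. \<forall>v\<in>P2_fibre x. u \<noteq> v \<longrightarrow> incomp (P2_carrier A) (P2_rel A r) u v"
  using P2_rel_not_0_1_same[OF assms(1)] P2_rel_not_1_0[of x x A r] assms(2)
  unfolding P2_fibre_def incomp_def P2_carrier_def by auto

lemma P2_fibre_maximal:
  assumes "refl_on A r" and "x \<in> A" and "z \<in> P2_carrier A"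
  shows "\<exists>u\<in>P2_fibre x. (z, u) \<in> P2_rel A r \<or> (u, z) \<in> P2_rel A r"
proof -
  obtain w i where z: "z = (w, i)" "w \<in> A" "i \<in> {0, 1}"
    using assms(3) unfolding P2_carrier_def by auto
  have refl: "a \<in> A \<Longrightarrow> (a, a) \<in> r" for a
    using assms(1) by (rule refl_onD)
  show ?thesis
  proof (cases "(w, x) \<in> r \<or> (x, w) \<in> r")
    case True
    then have "(z, (x, i)) \<in> P2_rel A r \<or> ((x, i), z) \<in> P2_rel A r"
      unfolding z(1) P2_rel_same_level_iff using z(2,3) assms(2) by blast
    moreover have "(x, i) \<in> P2_fibre x"
      using z(3) unfolding P2_fibre_def by auto
    ultimately show ?thesis by blast
  next
    case False
    then have "incomp A r w x" "incomp A r x w"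
      using z assms(2) unfolding incomp_def by auto
    then have "((w, 0), (x, 1)) \<in> P2_rel A r" "((x, 0), (w, 1)) \<in> P2_rel A r"
      unfolding P2_rel_0_1_iff using z(2) assms(2) refl by blast+
    then show ?thesis
      using z(1,3) unfolding P2_fibre_def by auto
  qed
qed

lemma P2_fibre_in_AM2:
  assumes "partial_order_on A r" and "x \<in> A"
  shows "P2_fibre x \<in> AM2 (P2_carrier A) (P2_rel A r)"
proof -
  have refl: "refl_on A r" and trans: "trans r"
    using assms(1) unfolding partial_order_on_def preorder_on_def by auto
  have "\<forall>u\<in>P2_fibre x. \<forall>v\<in>P2_fibre x. u \<noteq> v \<longrightarrow> incomp (P2_carrier A) (P2_rel A r) u v"
    using trans assms(2) by (rule P2_fibre_antichain)
  moreover have "\<forall>z\<in>P2_carrier A - P2_fibre x. \<exists>u\<in>P2_fibre x. (z, u) \<in> P2_rel A r \<or> (u, z) \<in> P2_rel A r"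
    using P2_fibre_maximal[OF refl assms(2)] by blast
  moreover have "P2_fibre x \<subseteq> P2_carrier A" "card (P2_fibre x) = 2"
    using assms(2) unfolding P2_fibre_def P2_carrier_def by auto
  ultimately show ?thesis
    unfolding AM2_def by blast
qed

lemma dominated_P2_fibre_iff:
  assumes "r \<subseteq> A \<times> A"
  shows "dominated (P2_rel A r) (P2_fibre x) (P2_fibre y) \<longleftrightarrow> (x, y) \<in> r"
proof
  assume "dominated (P2_rel A r) (P2_fibre x) (P2_fibre y)"
  then obtain v where "v \<in> P2_fibre y" "((x, 1), v) \<in> P2_rel A r"
    unfolding dominated_def P2_fibre_def by auto
  then show "(x, y) \<in> r"
    using P2_rel_not_1_0[of x y A r] unfolding P2_fibre_def by (auto simp: P2_rel_same_level_iff)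
next
  assume "(x, y) \<in> r"
  then show "dominated (P2_rel A r) (P2_fibre x) (P2_fibre y)"
    using assms unfolding dominated_def P2_fibre_def by (auto simp: P2_rel_same_level_iff)
qed

theorem lemma6p2:
  fixes A :: "'a set" and r :: "'a rel"
  assumes "partial_order_on A r"
  shows "\<exists>e. (\<forall>x\<in>A. e x \<in> AM2 (P2_carrier A) (P2_rel A r)) \<and>
             (\<forall>x\<in>A. \<forall>y\<in>A. (x, y) \<in> r \<longleftrightarrow> dominated (P2_rel A r) (e x) (e y))"
proof (intro exI conjI ballI)
  fix x assume "x \<in> A"
  with assms show "P2_fibre x \<in> AM2 (P2_carrier A) (P2_rel A r)"
    by (rule P2_fibre_in_AM2)
next
  have "r \<subseteq> A \<times> A"
    using assms by (auto dest: partial_order_onD(4))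
  then show "(x, y) \<in> r \<longleftrightarrow> dominated (P2_rel A r) (P2_fibre x) (P2_fibre y)" for x y
    by (simp add: dominated_P2_fibre_iff)
qed

end
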